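(* Let $G$ and $H$ be groups and let $f:G\to H$ be a quasimorphism, i.e. a function whose defect set $D(f)=\{f(y)^{-1}f(x)^{-1}f(xy)\mid x,y\in G\}$ is finite. Suppose $f$ is symmetric ($f(x^{-1})=f(x)^{-1}$ for all $x\in G$) and unital ($f(e_G)=e_H$). If $\Xi$ is an approximate subgroup of $G$, then $f(\Xi)$ is an approximate subgroup of $H$.
   Context: A subset $\Lambda$ of a group $G$ is an approximate subgroup if $\Lambda=\Lambda^{-1}$, $e\in\Lambda$, and there exists a finite subset $F\subset G$ such that $\Lambda^2=\{ab\mid a,b\in\Lambda\}\subseteq\Lambda F$. *)

theory Defs
  imports "HOL-Algebra.Group"
begin

definition set_prod :: "('a, 'b) monoid_scheme \<Rightarrow> 'a set \<Rightarrow> 'a set \<Rightarrow> 'a set" where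
  "set_prod G A B = {a \<otimes>\<^bsub>G\<^esub> b | a b. a \<in> A \<and> b \<in> B}"

definition approx_subgroup :: "('a, 'b) monoid_scheme \<Rightarrow> 'a set \<Rightarrow> bool" where
  "approx_subgroup G \<Lambda> \<longleftrightarrow>
     \<Lambda> \<subseteq> carrier G \<and>
     (\<lambda>x. inv\<^bsub>G\<^esub> x) ` \<Lambda> = \<Lambda> \<and>
     \<one>\<^bsub>G\<^esub> \<in> \<Lambda> \<and>
     (\<exists>F. finite F \<and> F \<subseteq> carrier G \<and> set_prod G \<Lambda> \<Lambda> \<subseteq> set_prod G \<Lambda> F)"

definition defect_set ::
  "('a, 'b) monoid_scheme \<Rightarrow> ('c, 'd) monoid_scheme \<Rightarrow> ('a \<Rightarrow> 'c) \<Rightarrow> 'c set" where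
  "defect_set G H f =
     {inv\<^bsub>H\<^esub> (f y) \<otimes>\<^bsub>H\<^esub> inv\<^bsub>H\<^esub> (f x) \<otimes>\<^bsub>H\<^esub> f (x \<otimes>\<^bsub>G\<^esub> y) | x y.
        x \<in> carrier G \<and> y \<in> carrier G}"

definition quasimorphism ::
  "('a, 'b) monoid_scheme \<Rightarrow> ('c, 'd) monoid_scheme \<Rightarrow> ('a \<Rightarrow> 'c) \<Rightarrow> bool" where
  "quasimorphism G H f \<longleftrightarrow> f \<in> carrier G \<rightarrow> carrier H \<and> finite (defect_set G H f)"

end

theory Submission
  imports Defs
begin

text \<open>Every product of values of f differs from the value of the product by an element of the
  defect set: f(xy) = f(x) f(y) d with d \<in> D(f). Hence if \<Lambda>\<Lambda> \<subseteq> \<Lambda>F, then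
  f(a) f(b) = f(ab) d1\<inverse> = f(\<xi>c) d1\<inverse> = f(\<xi>) f(c) d2 d1\<inverse> with \<xi> \<in> \<Lambda>, c \<in> F, so
  f(\<Lambda>) f(\<Lambda>) is covered by f(\<Lambda>) F' for the finite set F' = f(F) D(f) D(f)\<inverse>.
  Symmetry and unitality of f transfer the remaining axioms.\<close>

lemma mult_eq_mult_defect:
  assumes "monoid G" "group H" "f \<in> carrier G \<rightarrow> carrier H"
    and "x \<in> carrier G" "y \<in> carrier G"
  obtains d where "d \<in> defect_set G H f" "f (x \<otimes>\<^bsub>G\<^esub> y) = f x \<otimes>\<^bsub>H\<^esub> f y \<otimes>\<^bsub>H\<^esub> d"
proof
  interpret G: monoid G by fact
  interpret H: group H by fact
  let ?d = "inv\<^bsub>H\<^esub> (f y) \<otimes>\<^bsub>H\<^esub> inv\<^bsub>H\<^esub> (f x) \<otimes>\<^bsub>H\<^esub> f (x \<otimes>\<^bsub>G\<^esub> y)"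
  show "?d \<in> defect_set G H f"
    unfolding defect_set_def using assms(4,5) by blast
  have "f x \<in> carrier H" "f y \<in> carrier H" "f (x \<otimes>\<^bsub>G\<^esub> y) \<in> carrier H"
    using assms(3-5) by auto
  then show "f (x \<otimes>\<^bsub>G\<^esub> y) = f x \<otimes>\<^bsub>H\<^esub> f y \<otimes>\<^bsub>H\<^esub> ?d"
    by (simp add: H.m_assoc[symmetric] H.inv_mult_group[symmetric])
qed

lemma defect_set_subset_carrier:
  assumes "monoid G" "group H" "f \<in> carrier G \<rightarrow> carrier H"
  shows "defect_set G H f \<subseteq> carrier H"
proof -
  interpret G: monoid G by fact
  interpret H: group H by fact
  show ?thesis unfolding defect_set_def using assms(3) by fastforce
qed

lemma set_prod_image_subset_defect_translates:
  assumes "monoid G" "group H" "f \<in> carrier G \<rightarrow> carrier H"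
    and "A \<subseteq> carrier G" "B \<subseteq> carrier G" "C \<subseteq> carrier G" "F \<subseteq> carrier G"
    and "set_prod G A B \<subseteq> set_prod G C F"
  shows "set_prod H (f ` A) (f ` B) \<subseteq> set_prod H (f ` C)
    ((\<lambda>(c, d, d'). f c \<otimes>\<^bsub>H\<^esub> d \<otimes>\<^bsub>H\<^esub> inv\<^bsub>H\<^esub> d') ` (F \<times> defect_set G H f \<times> defect_set G H f))"
    (is "_ \<subseteq> set_prod H _ ?F'")
proof
  interpret H: group H by fact
  note f = assms(3)
  have defect_carrier: "defect_set G H f \<subseteq> carrier H"
    using defect_set_subset_carrier[OF assms(1-3)] .
  fix z assume "z \<in> set_prod H (f ` A) (f ` B)"
  then obtain a b where ab: "a \<in> A" "b \<in> B" and z: "z = f a \<otimes>\<^bsub>H\<^esub> f b"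
    unfolding set_prod_def by blast
  have "a \<otimes>\<^bsub>G\<^esub> b \<in> set_prod G C F" using ab assms(8) unfolding set_prod_def by blast
  then obtain \<xi> c where \<xi>c: "\<xi> \<in> C" "c \<in> F" and eq: "a \<otimes>\<^bsub>G\<^esub> b = \<xi> \<otimes>\<^bsub>G\<^esub> c"
    unfolding set_prod_def by blast
  have carr: "a \<in> carrier G" "b \<in> carrier G" "\<xi> \<in> carrier G" "c \<in> carrier G"
    using ab \<xi>c assms(4-7) by auto
  obtain d1 where d1: "d1 \<in> defect_set G H f" "f (a \<otimes>\<^bsub>G\<^esub> b) = f a \<otimes>\<^bsub>H\<^esub> f b \<otimes>\<^bsub>H\<^esub> d1"
    using mult_eq_mult_defect[OF assms(1,2) f carr(1,2)] .
  obtain d2 where d2: "d2 \<in> defect_set G H f" "f (\<xi> \<otimes>\<^bsub>G\<^esub> c) = f \<xi> \<otimes>\<^bsub>H\<^esub> f c \<otimes>\<^bsub>H\<^esub> d2"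
    using mult_eq_mult_defect[OF assms(1,2) f carr(3,4)] .
  have in_H: "f a \<in> carrier H" "f b \<in> carrier H" "f \<xi> \<in> carrier H" "f c \<in> carrier H"
    "d1 \<in> carrier H" "d2 \<in> carrier H"
    using carr f d1(1) d2(1) defect_carrier by auto
  have "z = f (a \<otimes>\<^bsub>G\<^esub> b) \<otimes>\<^bsub>H\<^esub> inv\<^bsub>H\<^esub> d1"
    using z d1(2) in_H by (simp add: H.m_assoc)
  also have "\<dots> = f \<xi> \<otimes>\<^bsub>H\<^esub> (f c \<otimes>\<^bsub>H\<^esub> d2 \<otimes>\<^bsub>H\<^esub> inv\<^bsub>H\<^esub> d1)"
    using eq d2(2) in_H by (simp add: H.m_assoc)
  finally have "z = f \<xi> \<otimes>\<^bsub>H\<^esub> (f c \<otimes>\<^bsub>H\<^esub> d2 \<otimes>\<^bsub>H\<^esub> inv\<^bsub>H\<^esub> d1)" .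
  moreover have "f c \<otimes>\<^bsub>H\<^esub> d2 \<otimes>\<^bsub>H\<^esub> inv\<^bsub>H\<^esub> d1 \<in> ?F'"
    using \<xi>c(2) d1(1) d2(1) by force
  ultimately show "z \<in> set_prod H (f ` C) ?F'"
    unfolding set_prod_def using \<xi>c(1) by blast
qed

theorem proposition3p17:
  fixes G :: "('a, 'b) monoid_scheme" and H :: "('c, 'd) monoid_scheme"
    and f :: "'a \<Rightarrow> 'c" and \<Xi> :: "'a set"
  assumes "group G" and "group H"
    and "quasimorphism G H f"
    and "\<And>x. x \<in> carrier G \<Longrightarrow> f (inv\<^bsub>G\<^esub> x) = inv\<^bsub>H\<^esub> (f x)"
    and "f \<one>\<^bsub>G\<^esub> = \<one>\<^bsub>H\<^esub>"
    and "approx_subgroup G \<Xi>"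
  shows "approx_subgroup H (f ` \<Xi>)"
proof -
  interpret G: group G by fact
  interpret H: group H by fact
  have f: "f \<in> carrier G \<rightarrow> carrier H" and D: "finite (defect_set G H f)"
    using assms(3) unfolding quasimorphism_def by auto
  obtain F where F: "finite F" "F \<subseteq> carrier G" "set_prod G \<Xi> \<Xi> \<subseteq> set_prod G \<Xi> F"
    and \<Xi>: "\<Xi> \<subseteq> carrier G" "(\<lambda>x. inv\<^bsub>G\<^esub> x) ` \<Xi> = \<Xi>" "\<one>\<^bsub>G\<^esub> \<in> \<Xi>"
    using assms(6) unfolding approx_subgroup_def by blast
  let ?F' = "(\<lambda>(c, d, d'). f c \<otimes>\<^bsub>H\<^esub> d \<otimes>\<^bsub>H\<^esub> inv\<^bsub>H\<^esub> d') ` (F \<times> defect_set G H f \<times> defect_set G H f)"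
  have "finite ?F'" using F(1) D by simp
  moreover have "?F' \<subseteq> carrier H"
    using F(2) f defect_set_subset_carrier[OF G.monoid_axioms assms(2) f] by fastforce
  moreover have "set_prod H (f ` \<Xi>) (f ` \<Xi>) \<subseteq> set_prod H (f ` \<Xi>) ?F'"
    using set_prod_image_subset_defect_translates[OF G.monoid_axioms assms(2) f \<Xi>(1) \<Xi>(1) \<Xi>(1) F(2,3)] .
  moreover have "(\<lambda>x. inv\<^bsub>H\<^esub> x) ` f ` \<Xi> = f ` (\<lambda>x. inv\<^bsub>G\<^esub> x) ` \<Xi>"
    using assms(4) \<Xi>(1) by (force simp: image_image intro!: image_cong)
  then have "(\<lambda>x. inv\<^bsub>H\<^esub> x) ` f ` \<Xi> = f ` \<Xi>"
    using \<Xi>(2) by simp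
  moreover have "f ` \<Xi> \<subseteq> carrier H" "\<one>\<^bsub>H\<^esub> \<in> f ` \<Xi>"
    using \<Xi>(1,3) f assms(5) by force+
  ultimately show ?thesis
    unfolding approx_subgroup_def by blast
qed

end
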